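(* Let $k\geq 2$ be an integer such that $n=2k+1$ is prime. Then there is a connected $k$-colouring of the edges of $K_n$ in which exactly $\frac{k(k-2)}{3}$ distinct $3$-sets of colours occur as colour sets of multicoloured triangles.
   Context: A $k$-colouring of the edges of the complete graph $K_n$ (colours from $\{1,\dots,k\}$) is called connected if for each colour $i$ the edges of colour $i$ form a connected spanning subgraph of $K_n$. A triangle is multicoloured if its three edges have three distinct colours; its colour set is the set of these three colours. *)

theory Defs
  imports Complex_Main "HOL-Computational_Algebra.Primes"
begin

definition edge_colouring :: "nat \<Rightarrow> nat \<Rightarrow> (nat \<Rightarrow> nat \<Rightarrow> nat) \<Rightarrow> bool" where
  "edge_colouring n k c \<longleftrightarrow>
     (\<forall>u<n. \<forall>v<n. u \<noteq> v \<longrightarrow> c u v = c v u \<and> c u v \<in> {1..k})"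

definition colour_class_connected :: "nat \<Rightarrow> (nat \<Rightarrow> nat \<Rightarrow> nat) \<Rightarrow> nat \<Rightarrow> bool" where
  "colour_class_connected n c i \<longleftrightarrow>
     (\<forall>u<n. \<forall>v<n. (\<lambda>x y. x < n \<and> y < n \<and> x \<noteq> y \<and> c x y = i)\<^sup>*\<^sup>* u v)"

definition connected_colouring :: "nat \<Rightarrow> nat \<Rightarrow> (nat \<Rightarrow> nat \<Rightarrow> nat) \<Rightarrow> bool" where
  "connected_colouring n k c \<longleftrightarrow>
     edge_colouring n k c \<and> (\<forall>i\<in>{1..k}. colour_class_connected n c i)"

definition multicoloured_colour_sets :: "nat \<Rightarrow> (nat \<Rightarrow> nat \<Rightarrow> nat) \<Rightarrow> nat set set" where
  "multicoloured_colour_sets n c =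
     {{c a b, c b d, c a d} | a b d. a < n \<and> b < n \<and> d < n \<and> a \<noteq> b \<and> b \<noteq> d \<and> a \<noteq> d
        \<and> card {c a b, c b d, c a d} = 3}"

end

theory Submission
  imports Defs "HOL-Combinatorics.Multiset_Permutations" "HOL-Number_Theory.Cong"
begin

text \<open>Identify the vertices of \<open>K\<^sub>n\<close>, \<open>n = 2k + 1\<close>, with the residues modulo \<open>n\<close> and colour the
  edge \<open>uv\<close> by the circular distance of \<open>u\<close> and \<open>v\<close>. Colour class \<open>i\<close> is the circulant graph
  generated by \<open>\<plusminus>i\<close>, which is connected because \<open>n\<close> is prime. A triangle \<open>a, b, d\<close> carries the
  colours of \<open>s\<close>, \<open>t\<close> and \<open>s + t\<close>, where \<open>s = a - b\<close> and \<open>t = b - d\<close>; the pairs \<open>(s, t)\<close> and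
  \<open>(-s, -t)\<close> give the same ordered colour list and no others do, so the ordered lists of
  multicoloured triangles correspond to the pairs with \<open>s \<in> {1..k}\<close> whose list has no repetition.
  For such \<open>s\<close> a colour repeats exactly when \<open>t \<equiv> 0, s, -s, -2s\<close> or \<open>-s/2\<close>, five distinct
  residues as \<open>3\<close> does not divide \<open>n\<close>. This gives \<open>k(n - 5) = 2k(k - 2)\<close> ordered lists, and every
  colour set is counted \<open>3! = 6\<close> times.\<close>

definition circ_dist :: "nat \<Rightarrow> int \<Rightarrow> nat" where
  "circ_dist n t = nat (min (t mod int n) ((- t) mod int n))"

lemma circ_dist_uminus [simp]: "circ_dist n (- t) = circ_dist n t"
  by (simp add: circ_dist_def min.commute)

lemma circ_dist_zero [simp]: "circ_dist n 0 = 0"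
  by (simp add: circ_dist_def)

lemma circ_dist_cases:
  assumes "n > 0"
  shows "int n dvd (int (circ_dist n t) - t) \<or> int n dvd (int (circ_dist n t) + t)"
proof -
  have "int (circ_dist n t) = t mod int n \<or> int (circ_dist n t) = (- t) mod int n"
    using assms by (simp add: circ_dist_def min_def)
  moreover have "int n dvd (t mod int n - t)" "int n dvd ((- t) mod int n + t)"
    using mod_eq_dvd_iff[of "t mod int n" "int n" t] mod_eq_dvd_iff[of "(- t) mod int n" "int n" "- t"]
    by simp_all
  ultimately show ?thesis by auto
qed

lemma circ_dist_eq_iff:
  assumes "n > 0"
  shows "circ_dist n s = circ_dist n t \<longleftrightarrow> int n dvd (s - t) \<or> int n dvd (s + t)"
proof
  assume "int n dvd (s - t) \<or> int n dvd (s + t)"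
  then have "s mod int n = t mod int n \<or> s mod int n = (- t) mod int n"
    by (simp add: mod_eq_dvd_iff)
  then show "circ_dist n s = circ_dist n t"
    by (metis circ_dist_def circ_dist_uminus mod_minus_eq)
next
  assume eq: "circ_dist n s = circ_dist n t"
  define d where "d = int (circ_dist n s)"
  have s: "int n dvd (d - s) \<or> int n dvd (d + s)"
    using circ_dist_cases[OF assms, of s] by (simp add: d_def)
  have t: "int n dvd (d - t) \<or> int n dvd (d + t)"
    using circ_dist_cases[OF assms, of t] by (simp add: d_def eq)
  have "s - t = (d - t) - (d - s)" "s + t = (d + t) - (d - s)"
    "s + t = (d + s) - (d - t)" "s - t = (d + s) - (d + t)"
    by simp_all
  with s t show "int n dvd (s - t) \<or> int n dvd (s + t)"
    by (metis dvd_diff)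
qed

lemma circ_dist_cong: "n > 0 \<Longrightarrow> int n dvd (s - t) \<Longrightarrow> circ_dist n s = circ_dist n t"
  by (simp add: circ_dist_eq_iff)

lemma circ_dist_eq_0_iff: "n > 0 \<Longrightarrow> circ_dist n t = 0 \<longleftrightarrow> int n dvd t"
  using circ_dist_eq_iff[of n t 0] by auto

lemma circ_dist_le:
  assumes "n > 0"
  shows "2 * circ_dist n t \<le> n"
proof (cases "int n dvd t")
  case True
  then show ?thesis by (simp add: circ_dist_def)
next
  case False
  then have "(- t) mod int n = int n - t mod int n"
    by (simp add: zmod_zminus1_eq_if dvd_eq_mod_eq_0)
  moreover have "0 \<le> t mod int n" "t mod int n < int n"
    using assms by simp_all
  ultimately have "2 * int (circ_dist n t) \<le> int n"
    by (simp add: circ_dist_def min_def)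
  then show ?thesis by linarith
qed

lemma circ_dist_of_small: "0 \<le> t \<Longrightarrow> 2 * t \<le> int n \<Longrightarrow> int (circ_dist n t) = t"
  by (cases "t = 0") (simp_all add: circ_dist_def zmod_zminus1_eq_if min_def)

lemma eq_of_dvd_diff_int:
  fixes m s t :: int
  assumes "0 \<le> s" "s < m" "0 \<le> t" "t < m" "m dvd (s - t)"
  shows "s = t"
  by (metis assms mod_eq_dvd_iff mod_pos_pos_trivial)

definition dist_colouring :: "nat \<Rightarrow> nat \<Rightarrow> nat \<Rightarrow> nat" where
  "dist_colouring n u v = circ_dist n (int u - int v)"

lemma dist_colouring_commute: "dist_colouring n u v = dist_colouring n v u"
  unfolding dist_colouring_def by (metis circ_dist_uminus minus_diff_eq)

lemma dist_colouring_in_colours: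
  assumes "u < 2 * k + 1" "v < 2 * k + 1" "u \<noteq> v"
  shows "dist_colouring (2 * k + 1) u v \<in> {1..k}"
proof -
  have "dist_colouring (2 * k + 1) u v \<noteq> 0"
    using assms eq_of_dvd_diff_int[of "int u" "int (2 * k + 1)" "int v"]
    by (auto simp: dist_colouring_def circ_dist_eq_0_iff)
  moreover have "2 * dist_colouring (2 * k + 1) u v \<le> 2 * k + 1"
    unfolding dist_colouring_def by (rule circ_dist_le) simp
  ultimately show ?thesis by simp
qed

lemma edge_colouring_dist_colouring: "edge_colouring (2 * k + 1) k (dist_colouring (2 * k + 1))"
  unfolding edge_colouring_def using dist_colouring_commute dist_colouring_in_colours by blast

lemma dist_colouring_add_mod:
  assumes "i \<in> {1..k}"
  shows "dist_colouring (2 * k + 1) u ((u + i) mod (2 * k + 1)) = i"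
proof -
  have "int (2 * k + 1) dvd int u - int ((u + i) mod (2 * k + 1)) - - int i"
    using dvd_minus_mod[of "int u + int i" "int (2 * k + 1)"] by (simp add: of_nat_mod algebra_simps)
  then have "dist_colouring (2 * k + 1) u ((u + i) mod (2 * k + 1)) = circ_dist (2 * k + 1) (- int i)"
    unfolding dist_colouring_def by (intro circ_dist_cong) simp_all
  also have "\<dots> = i"
    using assms circ_dist_of_small[of "int i" "2 * k + 1"] by simp
  finally show ?thesis .
qed

lemma rtranclp_add_mod_walk:
  fixes n i :: nat
  assumes "coprime i n" and step: "\<And>x. x < n \<Longrightarrow> R x ((x + i) mod n)"
    and "u < n" and "v < n"
  shows "R\<^sup>*\<^sup>* u v"
proof -
  have walk: "R\<^sup>*\<^sup>* u ((u + j * i) mod n)" for j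
  proof (induction j)
    case 0
    then show ?case using \<open>u < n\<close> by simp
  next
    case (Suc j)
    have "R ((u + j * i) mod n) (((u + j * i) mod n + i) mod n)"
      using step \<open>u < n\<close> by simp
    also have "((u + j * i) mod n + i) mod n = (u + Suc j * i) mod n"
      by (simp add: mod_add_right_eq algebra_simps)
    finally show ?case by (rule rtranclp.rtrancl_into_rtrancl[OF Suc.IH])
  qed
  obtain x where x: "[i * x = 1] (mod n)"
    using cong_solve_coprime_nat[OF \<open>coprime i n\<close>] by auto
  define w where "w = v + n - u"
  have "[i * x * w = 1 * w] (mod n)"
    using x by (intro cong_mult cong_refl)
  then have "[u + (x * w) * i = u + w] (mod n)"
    by (intro cong_add cong_refl) (simp add: ac_simps)
  moreover have "u + w = v + n"
    using \<open>u < n\<close> by (simp add: w_def)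
  ultimately have "(u + (x * w) * i) mod n = v"
    using \<open>v < n\<close> by (simp add: cong_def)
  with walk show ?thesis by metis
qed

lemma connected_colouring_dist_colouring:
  assumes "prime (2 * k + 1)"
  shows "connected_colouring (2 * k + 1) k (dist_colouring (2 * k + 1))"
  unfolding connected_colouring_def colour_class_connected_def
proof (intro conjI ballI allI impI edge_colouring_dist_colouring)
  fix i u v
  assume i: "i \<in> {1..k}" and "u < 2 * k + 1" "v < 2 * k + 1"
  have "\<not> 2 * k + 1 dvd i"
    using i by (auto dest: dvd_imp_le)
  then have "coprime i (2 * k + 1)"
    using prime_imp_coprime[OF assms] by (simp add: coprime_commute)
  then show "(\<lambda>x y. x < 2 * k + 1 \<and> y < 2 * k + 1 \<and> x \<noteq> y \<and> dist_colouring (2 * k + 1) x y = i)\<^sup>*\<^sup>* u v"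
  proof (rule rtranclp_add_mod_walk)
    fix x
    assume "x < 2 * k + 1"
    moreover have "dist_colouring (2 * k + 1) x ((x + i) mod (2 * k + 1)) = i"
      using i by (rule dist_colouring_add_mod)
    moreover have "dist_colouring (2 * k + 1) x x = 0"
      by (simp add: dist_colouring_def)
    ultimately show "x < 2 * k + 1 \<and> (x + i) mod (2 * k + 1) < 2 * k + 1 \<and>
        x \<noteq> (x + i) mod (2 * k + 1) \<and> dist_colouring (2 * k + 1) x ((x + i) mod (2 * k + 1)) = i"
      using i by auto
  qed fact+
qed

lemma card_distinct_lists_of_sets:
  assumes "finite F" and "\<And>A. A \<in> F \<Longrightarrow> finite A" and "\<And>A. A \<in> F \<Longrightarrow> card A = r"
  shows "card {xs. distinct xs \<and> set xs \<in> F} = fact r * card F"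
proof -
  have "{xs. distinct xs \<and> set xs \<in> F} = (\<Union>A\<in>F. permutations_of_set A)"
    by (auto simp: permutations_of_set_def)
  also have "card \<dots> = (\<Sum>A\<in>F. card (permutations_of_set A))"
  proof (rule card_UN_disjoint)
    show "\<forall>A\<in>F. \<forall>B\<in>F. A \<noteq> B \<longrightarrow> permutations_of_set A \<inter> permutations_of_set B = {}"
      by (auto simp: permutations_of_set_def)
  qed (simp_all add: assms(1))
  also have "\<dots> = fact r * card F"
    using assms(2,3) by simp
  finally show ?thesis .
qed

lemma finite_multicoloured_colour_sets: "finite (multicoloured_colour_sets n c)"
proof (rule finite_subset)
  show "multicoloured_colour_sets n c \<subseteq> (\<lambda>(a, b, d). {c a b, c b d, c a d}) ` ({..<n} \<times> {..<n} \<times> {..<n})"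
    unfolding multicoloured_colour_sets_def by force
qed simp

definition triangle_colours :: "('a \<Rightarrow> 'a \<Rightarrow> 'b) \<Rightarrow> 'a \<Rightarrow> 'a \<Rightarrow> 'a \<Rightarrow> 'b list" where
  "triangle_colours c a b d = [c a b, c b d, c a d]"

lemma distinct_list_of_three_elements:
  assumes "distinct xs" "set xs = {x, y, z}" "distinct [x, y, z]"
  shows "xs \<in> {[x, y, z], [x, z, y], [y, x, z], [y, z, x], [z, x, y], [z, y, x]}"
proof -
  have "length xs = 3"
    using distinct_card[OF assms(1)] assms(2,3) by simp
  then obtain p q r where xs: "xs = [p, q, r]"
    by (auto simp: numeral_3_eq_3 length_Suc_conv)
  have "p \<in> {x, y, z}" "q \<in> {x, y, z}" "r \<in> {x, y, z}"
    using assms(2) xs by auto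
  then show ?thesis
    using assms(1,3) unfolding xs by (elim insertE emptyE) simp_all
qed

lemma triangle_colours_permute:
  assumes sym: "\<And>u v. c u v = c v u" and "distinct (triangle_colours c a b d)"
    and "distinct xs" and "set xs = set (triangle_colours c a b d)"
  obtains a' b' d' where "{a', b', d'} = {a, b, d}" and "xs = triangle_colours c a' b' d'"
proof -
  have "xs \<in> {triangle_colours c a b d, triangle_colours c b a d, triangle_colours c d b a,
      triangle_colours c b d a, triangle_colours c d a b, triangle_colours c a d b}"
    using distinct_list_of_three_elements[of xs "c a b" "c b d" "c a d"] assms(2-4)
    by (simp add: triangle_colours_def sym[of b a] sym[of d b] sym[of d a])
  then show thesis
    using that by (auto simp: insert_commute)
qed

lemma distinct_lists_of_multicoloured_colour_sets:
  assumes sym: "\<And>u v. c u v = c v u"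
  shows "{xs. distinct xs \<and> set xs \<in> multicoloured_colour_sets n c} =
    {triangle_colours c a b d | a b d. a < n \<and> b < n \<and> d < n \<and> distinct (triangle_colours c a b d)}"
proof (intro equalityI subsetI)
  fix xs
  assume "xs \<in> {xs. distinct xs \<and> set xs \<in> multicoloured_colour_sets n c}"
  then obtain a b d where xs: "distinct xs" "set xs = set (triangle_colours c a b d)"
    and abd: "a < n" "b < n" "d < n" and "card (set (triangle_colours c a b d)) = 3"
    unfolding multicoloured_colour_sets_def triangle_colours_def by auto
  then have "distinct (triangle_colours c a b d)"
    by (intro card_distinct) (simp add: triangle_colours_def)
  then obtain a' b' d' where perm: "{a', b', d'} = {a, b, d}" and "xs = triangle_colours c a' b' d'"
    using triangle_colours_permute[OF sym _ xs] by blast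
  moreover have "{a', b', d'} \<subseteq> {..<n}"
    unfolding perm using abd by simp
  ultimately show "xs \<in> {triangle_colours c a b d | a b d. a < n \<and> b < n \<and> d < n \<and> distinct (triangle_colours c a b d)}"
    using xs(1) by blast
next
  fix xs
  assume "xs \<in> {triangle_colours c a b d | a b d. a < n \<and> b < n \<and> d < n \<and> distinct (triangle_colours c a b d)}"
  then obtain a b d where xs: "xs = triangle_colours c a b d" "distinct xs" and "a < n" "b < n" "d < n"
    by blast
  moreover from xs have "a \<noteq> b" "b \<noteq> d" "a \<noteq> d"
    using sym[of a b] sym[of d b] by (auto simp: triangle_colours_def)
  moreover from xs have "card {c a b, c b d, c a d} = 3"
    by (simp add: triangle_colours_def)
  moreover have "set xs = {c a b, c b d, c a d}"
    by (simp add: xs triangle_colours_def)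
  ultimately show "xs \<in> {xs. distinct xs \<and> set xs \<in> multicoloured_colour_sets n c}"
    unfolding multicoloured_colour_sets_def by blast
qed

definition diff_colours :: "nat \<Rightarrow> int \<Rightarrow> int \<Rightarrow> nat list" where
  "diff_colours n s t = [circ_dist n s, circ_dist n t, circ_dist n (s + t)]"

lemma triangle_colours_dist_colouring:
  "triangle_colours (dist_colouring n) a b d = diff_colours n (int a - int b) (int b - int d)"
  by (simp add: triangle_colours_def dist_colouring_def diff_colours_def)

lemma diff_colours_uminus [simp]: "diff_colours n (- s) (- t) = diff_colours n s t"
  unfolding diff_colours_def by (metis circ_dist_uminus minus_add_distrib)

lemma diff_colours_cong:
  assumes "n > 0" "int n dvd (s - s')" "int n dvd (t - t')"
  shows "diff_colours n s t = diff_colours n s' t'"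
proof -
  have "int n dvd ((s + t) - (s' + t'))"
    using dvd_add[OF assms(2,3)] by (simp add: algebra_simps)
  then show ?thesis
    using assms by (simp add: diff_colours_def circ_dist_cong)
qed

lemma not_dvd_of_distinct_diff_colours:
  assumes "n > 0" "distinct (diff_colours n s t)"
  shows "\<not> int n dvd s"
proof
  assume "int n dvd s"
  then have "circ_dist n (s + t) = circ_dist n t"
    using assms(1) by (simp add: circ_dist_cong)
  with assms(2) show False
    by (simp add: diff_colours_def)
qed

definition diff_params :: "nat \<Rightarrow> nat \<Rightarrow> (int \<times> int) set" where
  "diff_params n k = {(s, t). s \<in> {1..int k} \<and> t \<in> {0..<int n} \<and> distinct (diff_colours n s t)}"

lemma diff_colours_normal_form:
  assumes n: "n = 2 * k + 1" and dist: "distinct (diff_colours n s' t')"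
  obtains s t where "(s, t) \<in> diff_params n k" and "diff_colours n s t = diff_colours n s' t'"
proof -
  have "n > 0" using n by simp
  define s where "s = int (circ_dist n s')"
  have "\<not> int n dvd s'"
    using not_dvd_of_distinct_diff_colours \<open>n > 0\<close> dist by blast
  then have "circ_dist n s' \<noteq> 0" "2 * circ_dist n s' \<le> n"
    using \<open>n > 0\<close> by (simp_all add: circ_dist_eq_0_iff circ_dist_le)
  then have s: "s \<in> {1..int k}"
    using n by (simp add: s_def)
  from circ_dist_cases[OF \<open>n > 0\<close>, of s'] obtain t where
    "t \<in> {0..<int n}" and eq: "diff_colours n s t = diff_colours n s' t'"
    unfolding s_def[symmetric]
  proof
    assume "int n dvd (s - s')"
    moreover have "int n dvd (t' mod int n - t')"
      by (simp add: mod_eq_dvd_iff[symmetric])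
    ultimately show thesis
      using \<open>n > 0\<close> that[of "t' mod int n"] by (simp add: diff_colours_cong)
  next
    assume "int n dvd (s + s')"
    moreover have "int n dvd ((- t') mod int n + t')"
      using mod_eq_dvd_iff[of "(- t') mod int n" "int n" "- t'"] by simp
    ultimately show thesis
      using \<open>n > 0\<close> that[of "(- t') mod int n"] diff_colours_cong[of n s "- s'" "(- t') mod int n" "- t'"]
      by simp
  qed
  with s dist show thesis
    by (intro that[of s t]) (simp_all add: diff_params_def eq)
qed

lemma diff_colours_eq_triangle_colours:
  assumes "n > 0" and "t \<in> {0..<int n}"
  shows "diff_colours n s t = triangle_colours (dist_colouring n) (nat ((s + t) mod int n)) (nat t) 0"
  unfolding triangle_colours_dist_colouring using assms
  by (intro diff_colours_cong) (simp_all add: mod_eq_dvd_iff[symmetric] mod_diff_left_eq)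

lemma distinct_triangle_colours_dist_colouring:
  assumes n: "n = 2 * k + 1"
  shows "{triangle_colours (dist_colouring n) a b d | a b d.
      a < n \<and> b < n \<and> d < n \<and> distinct (triangle_colours (dist_colouring n) a b d)}
    = case_prod (diff_colours n) ` diff_params n k" (is "?T = _")
proof (intro equalityI subsetI)
  fix xs
  assume "xs \<in> ?T"
  then obtain s' t' where xs: "xs = diff_colours n s' t'" and "distinct xs"
    by (auto simp: triangle_colours_dist_colouring)
  with n obtain s t where "(s, t) \<in> diff_params n k" "diff_colours n s t = xs"
    by (metis diff_colours_normal_form)
  then show "xs \<in> case_prod (diff_colours n) ` diff_params n k"
    by force
next
  fix xs
  assume "xs \<in> case_prod (diff_colours n) ` diff_params n k"
  then obtain s t where "t \<in> {0..<int n}" and xs: "xs = diff_colours n s t" "distinct xs"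
    unfolding diff_params_def by auto
  moreover have "n > 0" using n by simp
  ultimately have "xs = triangle_colours (dist_colouring n) (nat ((s + t) mod int n)) (nat t) 0"
    by (simp add: diff_colours_eq_triangle_colours)
  moreover have "nat ((s + t) mod int n) < n" "nat t < n"
    using \<open>n > 0\<close> \<open>t \<in> {0..<int n}\<close> by (simp_all add: nat_less_iff)
  ultimately show "xs \<in> ?T"
    using \<open>n > 0\<close> xs(2) by blast
qed

lemma odd_dvd_double_iff:
  fixes m x :: int
  assumes "odd m"
  shows "m dvd 2 * x \<longleftrightarrow> m dvd x"
  using assms by (simp add: coprime_dvd_mult_right_iff)

lemma inj_on_diff_colours:
  assumes n: "n = 2 * k + 1"
  shows "inj_on (case_prod (diff_colours n)) (diff_params n k)"
proof (rule inj_onI, clarify)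
  fix s t s' t'
  assume "(s, t) \<in> diff_params n k" "(s', t') \<in> diff_params n k"
    and eq: "diff_colours n s t = diff_colours n s' t'"
  then have s: "s \<in> {1..int k}" "s' \<in> {1..int k}" and t: "t \<in> {0..<int n}" "t' \<in> {0..<int n}"
    unfolding diff_params_def by auto
  have "n > 0" using n by simp
  have "int (circ_dist n s) = s" "int (circ_dist n s') = s'"
    using s n by (simp_all add: circ_dist_of_small)
  moreover have "circ_dist n s = circ_dist n s'"
    using eq by (simp add: diff_colours_def)
  ultimately have "s = s'" by metis
  have "int n dvd (t - t')"
  proof (rule ccontr)
    assume not_dvd: "\<not> int n dvd (t - t')"
    have "circ_dist n t = circ_dist n t'" "circ_dist n (s + t) = circ_dist n (s + t')"
      using eq \<open>s = s'\<close> by (simp_all add: diff_colours_def)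
    then have "int n dvd (t + t')" "int n dvd ((s + t) + (s + t'))"
      using not_dvd \<open>n > 0\<close> by (simp_all add: circ_dist_eq_iff)
    moreover have "2 * s = ((s + t) + (s + t')) - (t + t')"
      by simp
    ultimately have "int n dvd 2 * s"
      by (metis dvd_diff)
    then have "int n dvd s"
      using n by (simp add: odd_dvd_double_iff)
    then have "int n \<le> s"
      using s by (intro zdvd_imp_le) auto
    then show False
      using s n by simp
  qed
  with t have "t = t'"
    by (intro eq_of_dvd_diff_int[of t "int n" t']) auto
  with \<open>s = s'\<close> show "s = s' \<and> t = t'" by simp
qed

lemma card_residues_avoiding:
  fixes m :: int
  assumes "m > 0" and "finite R"
  shows "card {t \<in> {0..<m}. \<forall>r\<in>R. \<not> m dvd (t - r)} = nat m - card ((\<lambda>r. r mod m) ` R)"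
proof -
  have "{t \<in> {0..<m}. \<forall>r\<in>R. \<not> m dvd (t - r)} = {0..<m} - (\<lambda>r. r mod m) ` R"
    by (auto simp: mod_eq_dvd_iff[symmetric])
  moreover have "(\<lambda>r. r mod m) ` R \<subseteq> {0..<m}"
    using assms(1) by auto
  ultimately show ?thesis
    using assms(2) by (simp add: card_Diff_subset)
qed

lemma distinct_diff_colours_iff:
  assumes n: "n = 2 * k + 1" and "\<not> int n dvd s"
  shows "distinct (diff_colours n s t) \<longleftrightarrow> (\<forall>r\<in>{0, s, - s, - 2 * s, int k * s}. \<not> int n dvd (t - r))"
proof -
  have "n > 0" using n by simp
  \<comment> \<open>\<open>k * s\<close> is \<open>-s/2\<close> modulo \<open>2k + 1\<close>.\<close>
  have half: "int n dvd (2 * t + s) \<longleftrightarrow> int n dvd (t - int k * s)"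
  proof -
    have "t - int k * s = int n * t - int k * (2 * t + s)" "2 * t + s = 2 * (t - int k * s) + int n * s"
      using n by (simp_all add: algebra_simps)
    then show ?thesis
      by (metis dvd_add dvd_diff dvd_mult dvd_triv_left)
  qed
  show ?thesis
    using assms(2) half \<open>n > 0\<close>
    by (auto simp: diff_colours_def circ_dist_eq_iff algebra_simps)
qed

lemma card_forbidden_residues:
  assumes n: "n = 2 * k + 1" and "\<not> 3 dvd n" and s: "\<not> int n dvd s"
  shows "card ((\<lambda>r. r mod int n) ` {0, s, - s, - 2 * s, int k * s}) = 5"
proof -
  have dvd2: "int n dvd 2 * x \<longleftrightarrow> int n dvd x" for x
    using n by (simp add: odd_dvd_double_iff)
  have "\<not> 3 dvd int n"
    using \<open>\<not> 3 dvd n\<close> by (metis int_dvd_int_iff of_nat_numeral)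
  then have "coprime (int n) 3"
    using prime_imp_coprime[of "3::int" "int n"] by (simp add: coprime_commute)
  then have dvd3: "int n dvd 3 * x \<longleftrightarrow> int n dvd x" for x
    by (simp add: coprime_dvd_mult_right_iff)
  have not_dvd: "\<not> int n dvd x" if "2 * x = c + int n * m" and "\<not> int n dvd c" for x c m
  proof
    assume "int n dvd x"
    then have "int n dvd c + int n * m"
      unfolding that(1)[symmetric] by simp
    then show False
      using that(2) by (metis add_diff_cancel_right' dvd_diff dvd_triv_left)
  qed
  have "\<not> int n dvd - s" "\<not> int n dvd 3 * s"
    using s dvd3 by simp_all
  then have k_s: "\<not> int n dvd (int k * s)" "\<not> int n dvd (s - int k * s)"
    "\<not> int n dvd (s + int k * s)" "\<not> int n dvd (2 * s + int k * s)"
    using s not_dvd[of "int k * s" "- s" s] not_dvd[of "s - int k * s" "3 * s" "- s"]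
      not_dvd[of "s + int k * s" s s] not_dvd[of "2 * s + int k * s" "3 * s" s]
    by (simp_all add: n algebra_simps)
  moreover have "\<not> int n dvd - s - int k * s" "\<not> int n dvd - (2 * s) - int k * s"
    using k_s(3,4) dvd_minus_iff[of "int n" "s + int k * s"] dvd_minus_iff[of "int n" "2 * s + int k * s"]
    by simp_all
  ultimately have "distinct (map (\<lambda>r. r mod int n) [0, s, - s, - 2 * s, int k * s])"
    using s dvd2 dvd3 by (simp add: mod_eq_dvd_iff dvd_eq_mod_eq_0[symmetric] dvd_minus_iff)
  then show ?thesis
    by (simp add: distinct_card[symmetric])
qed

lemma card_diff_params:
  assumes n: "n = 2 * k + 1" and "\<not> 3 dvd n"
  shows "card (diff_params n k) = k * (n - 5)"
proof -
  have "n > 0" using n by simp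
  have not_dvd: "\<not> int n dvd s" if "s \<in> {1..int k}" for s
    using that n zdvd_imp_le[of "int n" s] by auto
  have "diff_params n k = (SIGMA s:{1..int k}. {t \<in> {0..<int n}. distinct (diff_colours n s t)})"
    by (auto simp: diff_params_def)
  also have "card \<dots> = (\<Sum>s\<in>{1..int k}. card {t \<in> {0..<int n}. distinct (diff_colours n s t)})"
    by (intro card_SigmaI) (auto intro: finite_subset[where B = "{0..<int n}"])
  also have "\<dots> = (\<Sum>s\<in>{1..int k}. n - 5)"
  proof (rule sum.cong)
    fix s
    assume "s \<in> {1..int k}"
    then show "card {t \<in> {0..<int n}. distinct (diff_colours n s t)} = n - 5"
      using distinct_diff_colours_iff[OF n not_dvd] card_forbidden_residues[OF n \<open>\<not> 3 dvd n\<close> not_dvd]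
        card_residues_avoiding[of "int n" "{0, s, - s, - 2 * s, int k * s}"] \<open>n > 0\<close>
      by simp
  qed simp
  also have "\<dots> = k * (n - 5)"
    by simp
  finally show ?thesis .
qed

lemma card_multicoloured_colour_sets_dist_colouring:
  assumes n: "n = 2 * k + 1" and "\<not> 3 dvd n"
  shows "6 * card (multicoloured_colour_sets n (dist_colouring n)) = k * (n - 5)"
proof -
  let ?S = "multicoloured_colour_sets n (dist_colouring n)"
  have "6 * card ?S = card {xs. distinct xs \<and> set xs \<in> ?S}"
  proof (subst card_distinct_lists_of_sets[where r = 3])
    show "\<And>A. A \<in> ?S \<Longrightarrow> card A = 3"
      unfolding multicoloured_colour_sets_def by auto
    then show "\<And>A. A \<in> ?S \<Longrightarrow> finite A"
      by (metis card.infinite zero_neq_numeral)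
  qed (simp_all add: finite_multicoloured_colour_sets fact_numeral)
  also have "\<dots> = card (case_prod (diff_colours n) ` diff_params n k)"
    using distinct_lists_of_multicoloured_colour_sets[OF dist_colouring_commute]
      distinct_triangle_colours_dist_colouring[OF n] by simp
  also have "\<dots> = k * (n - 5)"
    by (simp add: card_image inj_on_diff_colours[OF n] card_diff_params[OF assms])
  finally show ?thesis .
qed

theorem proposition3:
  fixes k :: nat
  assumes "k \<ge> 2" and "prime (2 * k + 1)"
  shows "\<exists>c. connected_colouring (2 * k + 1) k c \<and>
           real (card (multicoloured_colour_sets (2 * k + 1) c)) = real k * (real k - 2) / 3"
proof (intro exI conjI)
  let ?c = "dist_colouring (2 * k + 1)"
  show "connected_colouring (2 * k + 1) k ?c"
    using assms(2) by (rule connected_colouring_dist_colouring)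
  have "\<not> 3 dvd 2 * k + 1"
    using assms prime_nat_iff[of "2 * k + 1"] by auto
  then have "real (6 * card (multicoloured_colour_sets (2 * k + 1) ?c)) = real (k * (2 * k - 4))"
    using card_multicoloured_colour_sets_dist_colouring[of "2 * k + 1" k] by simp
  then show "real (card (multicoloured_colour_sets (2 * k + 1) ?c)) = real k * (real k - 2) / 3"
    using assms(1) by (simp add: of_nat_diff field_simps)
qed

end
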